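(* Let $I\subseteq\mathbb{K}[x_1,\dots,x_d]$ be an ideal generated by at most $d-1$ pure difference binomials. There exists a non-trivial linear loop such that every polynomial $p\in I$ is an invariant of the loop.
   Context: $\mathbb{K}=\overline{\mathbb{Q}}$. A pure difference binomial is $\bm{x}^{\bm{\alpha}}-\bm{x}^{\bm{\beta}}$ with $\bm{\alpha},\bm{\beta}\in\mathbb{N}^d$. A linear loop with initial vector $\bm{s}\in\mathbb{Q}^d$ and update matrix $M\in\mathbb{Q}^{d\times d}$ has orbit $\{M^n\bm{s} : n\ge0\}$; a polynomial $P$ is an invariant if $P(M^n\bm{s})=0$ for all $n\ge0$. The loop is non-trivial if its orbit is an infinite set. *)

theory Defs
  imports "HOL-Library.Poly_Mapping" "HOL-Computational_Algebra.Polynomial" "Jordan_Normal_Form.Matrix"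
begin

text \<open>Multivariate polynomials: finitely supported maps from monomials (exponent vectors
  nat-to-nat maps; variable x_(i+1) is index i) to coefficients.  The field K (algebraic
  closure of Q) is realised as the algebraic complex numbers.\<close>
type_synonym 'a mpoly = "(nat \<Rightarrow>\<^sub>0 nat) \<Rightarrow>\<^sub>0 'a"

definition mpoly_eval :: "complex mpoly \<Rightarrow> (nat \<Rightarrow> complex) \<Rightarrow> complex" where
  "mpoly_eval p x = (\<Sum>m\<in>Poly_Mapping.keys p. Poly_Mapping.lookup p m * (\<Prod>i\<in>Poly_Mapping.keys m. x i ^ Poly_Mapping.lookup m i))"

definition in_Kpoly :: "nat \<Rightarrow> complex mpoly \<Rightarrow> bool" where
  "in_Kpoly d p \<longleftrightarrow> (\<forall>m\<in>Poly_Mapping.keys p. algebraic (Poly_Mapping.lookup p m) \<and> Poly_Mapping.keys m \<subseteq> {..<d})"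

definition pure_diff_binomial :: "(nat \<Rightarrow>\<^sub>0 nat) \<Rightarrow> (nat \<Rightarrow>\<^sub>0 nat) \<Rightarrow> complex mpoly" where
  "pure_diff_binomial \<alpha> \<beta> = Poly_Mapping.single \<alpha> 1 - Poly_Mapping.single \<beta> 1"

definition generated_ideal :: "nat \<Rightarrow> complex mpoly list \<Rightarrow> complex mpoly set" where
  "generated_ideal d gs = {(\<Sum>i<length gs. q i * gs ! i) | q. \<forall>i<length gs. in_Kpoly d (q i)}"

definition loop_orbit :: "rat mat \<Rightarrow> rat vec \<Rightarrow> rat vec set" where
  "loop_orbit M s = {M ^\<^sub>m n *\<^sub>v s | n. True}"

definition nontrivial_loop :: "rat mat \<Rightarrow> rat vec \<Rightarrow> bool" where
  "nontrivial_loop M s \<longleftrightarrow> infinite (loop_orbit M s)"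

definition is_invariant :: "rat mat \<Rightarrow> rat vec \<Rightarrow> complex mpoly \<Rightarrow> bool" where
  "is_invariant M s p \<longleftrightarrow> (\<forall>n. mpoly_eval p (\<lambda>i. of_rat ((M ^\<^sub>m n *\<^sub>v s) $ i)) = 0)"

end

theory Submission
  imports Defs "Jordan_Normal_Form.Determinant"
begin

text \<open>Fewer than \<open>d\<close> integer vectors in \<open>\<int>\<^sup>d\<close>, here the exponent differences
  \<open>\<alpha> - \<beta>\<close> of the generators, have a common nonzero orthogonal vector \<open>w \<in> \<int>\<^sup>d\<close>.
  Started at \<open>(1,\<dots>,1)\<close>, the diagonal loop \<open>x\<^sub>i \<mapsto> 2\<^bsup>w\<^sub>i\<^esup> x\<^sub>i\<close> visits the points
  \<open>(2\<^bsup>n w\<^sub>i\<^esup>)\<^sub>i\<close>, where \<open>x\<^bsup>\<alpha>\<^esup>\<close> takes the value \<open>2\<^bsup>n \<langle>\<alpha>, w\<rangle>\<^esup> = x\<^bsup>\<beta>\<^esup>\<close>.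
  So every generator, hence every element of the ideal, vanishes on the orbit, and the
  orbit is infinite because some \<open>w\<^sub>j \<noteq> 0\<close>.\<close>

definition monomial_value :: "('a \<Rightarrow> 'b::comm_semiring_1) \<Rightarrow> ('a \<Rightarrow>\<^sub>0 nat) \<Rightarrow> 'b" where
  "monomial_value x m = (\<Prod>i\<in>Poly_Mapping.keys m. x i ^ Poly_Mapping.lookup m i)"

lemma monomial_value_superset:
  assumes "finite S" "Poly_Mapping.keys m \<subseteq> S"
  shows "monomial_value x m = (\<Prod>i\<in>S. x i ^ Poly_Mapping.lookup m i)"
  unfolding monomial_value_def
  by (rule prod.mono_neutral_left) (use assms in \<open>auto simp: in_keys_iff\<close>)

lemma monomial_value_add: "monomial_value x (a + b) = monomial_value x a * monomial_value x b"
proof -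
  let ?S = "Poly_Mapping.keys a \<union> Poly_Mapping.keys b"
  have "monomial_value x (a + b) = (\<Prod>i\<in>?S. x i ^ Poly_Mapping.lookup (a + b) i)"
    by (rule monomial_value_superset) (simp_all add: keys_add)
  also have "\<dots> = (\<Prod>i\<in>?S. x i ^ Poly_Mapping.lookup a i) * (\<Prod>i\<in>?S. x i ^ Poly_Mapping.lookup b i)"
    by (simp add: lookup_add power_add prod.distrib)
  also have "\<dots> = monomial_value x a * monomial_value x b"
    using monomial_value_superset[of ?S a x] monomial_value_superset[of ?S b x] by simp
  finally show ?thesis .
qed

lemma monomial_value_power: "monomial_value (\<lambda>i. x i ^ n) m = monomial_value x m ^ n"
  by (simp add: monomial_value_def prod_power_distrib flip: power_mult) (simp add: mult.commute)

lemma monomial_value_of_rat: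
  "monomial_value (\<lambda>i. of_rat (x i) :: 'a::field_char_0) m = of_rat (monomial_value x m)"
  by (simp add: monomial_value_def of_rat_prod of_rat_power)

lemma monomial_value_cong:
  "(\<And>i. i \<in> Poly_Mapping.keys m \<Longrightarrow> x i = y i) \<Longrightarrow> monomial_value x m = monomial_value y m"
  unfolding monomial_value_def by (rule prod.cong) simp_all

lemma power_int_sum:
  fixes a :: "'a::field"
  assumes "a \<noteq> 0"
  shows "a powi (\<Sum>i\<in>S. f i) = (\<Prod>i\<in>S. a powi f i)"
  using assms by (induction S rule: infinite_finite_induct) (simp_all add: power_int_add)

lemma power_int_eq_1_iff:
  fixes a :: "'a::linordered_field"
  assumes "1 < a"
  shows "a powi k = 1 \<longleftrightarrow> k = 0"
  using power_int_strict_increasing[of 0 k a] power_int_strict_increasing[of k 0 a] assms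
  by (cases k "0::int" rule: linorder_cases) auto

lemma monomial_value_power_int:
  fixes a :: "'a::field"
  assumes "a \<noteq> 0" "finite S" "Poly_Mapping.keys m \<subseteq> S"
  shows "monomial_value (\<lambda>i. a powi w i) m = a powi (\<Sum>i\<in>S. int (Poly_Mapping.lookup m i) * w i)"
proof -
  have "(a powi w i) ^ k = a powi (int k * w i)" for i k
    using power_int_mult[of a "w i" "int k"] by (simp add: mult.commute)
  then show ?thesis
    using assms by (simp add: monomial_value_superset power_int_sum)
qed

lemma mpoly_eval_superset:
  assumes "finite S" "Poly_Mapping.keys p \<subseteq> S"
  shows "mpoly_eval p x = (\<Sum>m\<in>S. Poly_Mapping.lookup p m * monomial_value x m)"
  unfolding mpoly_eval_def monomial_value_def[symmetric]
  by (rule sum.mono_neutral_left) (use assms in \<open>auto simp: in_keys_iff\<close>)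

lemma mpoly_eval_zero [simp]: "mpoly_eval 0 x = 0"
  by (simp add: mpoly_eval_def)

lemma mpoly_eval_single: "mpoly_eval (Poly_Mapping.single m c) x = c * monomial_value x m"
  by (cases "c = 0") (auto simp: mpoly_eval_def monomial_value_def)

lemma mpoly_eval_add: "mpoly_eval (p + q) x = mpoly_eval p x + mpoly_eval q x"
proof -
  let ?S = "Poly_Mapping.keys p \<union> Poly_Mapping.keys q"
  show ?thesis
    using mpoly_eval_superset[of ?S p x] mpoly_eval_superset[of ?S q x]
      mpoly_eval_superset[of ?S "p + q" x] keys_add[of p q]
    by (simp add: lookup_add distrib_right sum.distrib)
qed

lemma mpoly_eval_diff: "mpoly_eval (p - q) x = mpoly_eval p x - mpoly_eval q x"
  using mpoly_eval_add[of "p - q" q x] by simp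

lemma mpoly_eval_sum: "mpoly_eval (\<Sum>i\<in>I. f i) x = (\<Sum>i\<in>I. mpoly_eval (f i) x)"
  by (induction I rule: infinite_finite_induct) (auto simp: mpoly_eval_add)

lemma poly_mapping_sum_single:
  "p = (\<Sum>m\<in>Poly_Mapping.keys p. Poly_Mapping.single m (Poly_Mapping.lookup p m))"
  by (rule poly_mapping_eqI) (auto simp: lookup_sum lookup_single when_def in_keys_iff)

lemma mpoly_eval_mult: "mpoly_eval (p * q) x = mpoly_eval p x * mpoly_eval q x"
proof -
  have "p * q = (\<Sum>m\<in>Poly_Mapping.keys p. \<Sum>n\<in>Poly_Mapping.keys q.
      Poly_Mapping.single m (Poly_Mapping.lookup p m) * Poly_Mapping.single n (Poly_Mapping.lookup q n))"
    by (subst poly_mapping_sum_single[of p], subst poly_mapping_sum_single[of q])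
      (simp add: sum_distrib_left sum_distrib_right sum.swap[of _ "Poly_Mapping.keys p"])
  then have "mpoly_eval (p * q) x = (\<Sum>m\<in>Poly_Mapping.keys p. \<Sum>n\<in>Poly_Mapping.keys q.
      (Poly_Mapping.lookup p m * monomial_value x m) * (Poly_Mapping.lookup q n * monomial_value x n))"
    by (simp add: mpoly_eval_sum mult_single mpoly_eval_single monomial_value_add mult_ac)
  also have "\<dots> = mpoly_eval p x * mpoly_eval q x"
    by (simp add: mpoly_eval_def monomial_value_def sum_product)
  finally show ?thesis .
qed

lemma is_invariant_generated_ideal:
  assumes "\<forall>g\<in>set gs. is_invariant M s g" and "p \<in> generated_ideal d gs"
  shows "is_invariant M s p"
proof -
  obtain q where "p = (\<Sum>i<length gs. q i * gs ! i)"
    using assms(2) by (auto simp: generated_ideal_def)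
  then show ?thesis
    using assms(1) by (simp add: is_invariant_def mpoly_eval_sum mpoly_eval_mult)
qed

lemma mat_diag_pow: "mat_diag d c ^\<^sub>m n = mat_diag d (\<lambda>i. c i ^ n)"
proof (induction n)
  case 0
  show ?case by (simp add: mat_diag_def)
next
  case (Suc n)
  then show ?case by (simp add: power_Suc2 del: power_Suc)
qed

lemma mat_diag_mult_vec:
  assumes "v \<in> carrier_vec d"
  shows "mat_diag d c *\<^sub>v v = vec d (\<lambda>i. c i * v $ i)"
proof (rule eq_vecI)
  fix i assume "i < dim_vec (vec d (\<lambda>i. c i * v $ i))"
  then have "i < d" by simp
  have "(\<Sum>k<d. (if i = k then c k else 0) * v $ k) = (\<Sum>k<d. if k = i then c i * v $ i else 0)"
    by (rule sum.cong) auto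
  then have "(\<Sum>k<d. (if i = k then c k else 0) * v $ k) = c i * v $ i"
    using \<open>i < d\<close> by simp
  then show "(mat_diag d c *\<^sub>v v) $ i = vec d (\<lambda>i. c i * v $ i) $ i"
    using \<open>i < d\<close> assms by (simp add: mat_diag_def scalar_prod_def atLeast0LessThan)
qed (use assms in \<open>simp add: mat_diag_def\<close>)

lemma mat_diag_pow_mult_vec:
  "v \<in> carrier_vec d \<Longrightarrow> mat_diag d c ^\<^sub>m n *\<^sub>v v = vec d (\<lambda>i. c i ^ n * v $ i)"
  by (simp add: mat_diag_pow mat_diag_mult_vec)

lemma is_invariant_binomial_mat_diag:
  assumes "Poly_Mapping.keys \<alpha> \<subseteq> {..<d}" "Poly_Mapping.keys \<beta> \<subseteq> {..<d}"
    and "monomial_value c \<alpha> = monomial_value c \<beta>"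
  shows "is_invariant (mat_diag d c) (vec d (\<lambda>_. 1)) (pure_diff_binomial \<alpha> \<beta>)"
  unfolding is_invariant_def
proof
  fix n
  let ?x = "\<lambda>i. of_rat ((mat_diag d c ^\<^sub>m n *\<^sub>v vec d (\<lambda>_. 1)) $ i) :: complex"
  have "monomial_value ?x \<gamma> = of_rat (monomial_value c \<gamma> ^ n)"
    if "Poly_Mapping.keys \<gamma> \<subseteq> {..<d}" for \<gamma>
  proof -
    have "monomial_value ?x \<gamma> = monomial_value (\<lambda>i. of_rat (c i ^ n) :: complex) \<gamma>"
      using that by (intro monomial_value_cong) (auto simp: mat_diag_pow_mult_vec)
    then show ?thesis
      by (simp add: monomial_value_of_rat monomial_value_power)
  qed
  then show "mpoly_eval (pure_diff_binomial \<alpha> \<beta>) ?x = 0"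
    using assms by (simp add: pure_diff_binomial_def mpoly_eval_diff mpoly_eval_single)
qed

lemma nontrivial_loop_mat_diag:
  assumes "j < d" "v \<in> carrier_vec d" "v $ j \<noteq> 0" "c j > 0" "c j \<noteq> 1"
  shows "nontrivial_loop (mat_diag d c) v"
proof -
  have coord: "(mat_diag d c ^\<^sub>m k *\<^sub>v v) $ j = c j ^ k * v $ j" for k
    using assms(1,2) by (simp add: mat_diag_pow_mult_vec)
  have "inj (\<lambda>n. mat_diag d c ^\<^sub>m n *\<^sub>v v)"
  proof (rule injI)
    fix m n assume "mat_diag d c ^\<^sub>m m *\<^sub>v v = mat_diag d c ^\<^sub>m n *\<^sub>v v"
    then have "(mat_diag d c ^\<^sub>m m *\<^sub>v v) $ j = (mat_diag d c ^\<^sub>m n *\<^sub>v v) $ j"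
      by (rule arg_cong)
    then have "c j ^ m = c j ^ n"
      using assms(3) by (simp only: coord) simp
    then show "m = n"
      using power_inject_exp'[OF assms(5,4)] by simp
  qed
  moreover have "loop_orbit M s = range (\<lambda>n. M ^\<^sub>m n *\<^sub>v s)" for M s
    by (auto simp: loop_orbit_def)
  ultimately show ?thesis
    by (simp add: nontrivial_loop_def range_inj_infinite)
qed

lemma det_zero_row:
  assumes "A \<in> carrier_mat d d" "k < d" "\<forall>j<d. A $$ (k, j) = 0"
  shows "det A = 0"
proof -
  have "A = mat\<^sub>r d d (\<lambda>i. if i = k then 0\<^sub>v d else row A i)"
    using assms by (intro eq_matI) auto
  also have "det \<dots> = 0"
    by (rule det_row_0) (use assms in auto)
  finally show ?thesis .
qed

lemma exists_nonzero_orthogonal_int: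
  fixes rs :: "(nat \<Rightarrow> int) list"
  assumes "length rs < d"
  shows "\<exists>w. (\<exists>j<d. w j \<noteq> 0) \<and> (\<forall>r\<in>set rs. (\<Sum>i<d. r i * w i) = 0)"
proof -
  define A :: "int mat" where "A = mat d d (\<lambda>(k, i). if k < length rs then (rs ! k) i else 0)"
  have A: "A \<in> carrier_mat d d" by (simp add: A_def)
  have "det A = 0"
    by (rule det_zero_row[OF A, of "d - 1"]) (use assms in \<open>auto simp: A_def\<close>)
  then obtain v where v: "v \<in> carrier_vec d" "v \<noteq> 0\<^sub>v d" "A *\<^sub>v v = 0\<^sub>v d"
    using det_0_iff_vec_prod_zero[OF A] by blast
  have "\<exists>j<d. v $ j \<noteq> 0"
    using v(1,2) by (metis carrier_vecD eq_vecI index_zero_vec(1,2))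
  moreover have "(\<Sum>i<d. r i * v $ i) = 0" if "r \<in> set rs" for r
  proof -
    obtain k where k: "k < length rs" "r = rs ! k"
      using \<open>r \<in> set rs\<close> by (auto simp: in_set_conv_nth)
    have "(A *\<^sub>v v) $ k = 0"
      using v(3) k(1) assms by simp
    then show ?thesis
      using k assms v(1) by (simp add: A_def scalar_prod_def atLeast0LessThan)
  qed
  ultimately show ?thesis by blast
qed

lemma exists_weight_balancing_exponents:
  fixes G :: "((nat \<Rightarrow>\<^sub>0 nat) \<times> (nat \<Rightarrow>\<^sub>0 nat)) list"
  assumes "length G < d"
  shows "\<exists>w. (\<exists>j<d. w j \<noteq> 0) \<and> (\<forall>(\<alpha>, \<beta>)\<in>set G.
           (\<Sum>i<d. int (Poly_Mapping.lookup \<alpha> i) * w i) = (\<Sum>i<d. int (Poly_Mapping.lookup \<beta> i) * w i))"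
proof -
  let ?diff = "\<lambda>(\<alpha>, \<beta>) i. int (Poly_Mapping.lookup \<alpha> i) - int (Poly_Mapping.lookup \<beta> i)"
  obtain w where nonzero: "\<exists>j<d. w j \<noteq> 0"
    and orthogonal: "\<forall>r\<in>set (map ?diff G). (\<Sum>i<d. r i * w i) = 0"
    using exists_nonzero_orthogonal_int[of "map ?diff G" d] assms by auto
  have "(\<Sum>i<d. int (Poly_Mapping.lookup \<alpha> i) * w i) = (\<Sum>i<d. int (Poly_Mapping.lookup \<beta> i) * w i)"
    if "(\<alpha>, \<beta>) \<in> set G" for \<alpha> \<beta>
  proof -
    have "?diff (\<alpha>, \<beta>) \<in> set (map ?diff G)"
      using that unfolding set_map by (rule imageI)
    then have "(\<Sum>i<d. ?diff (\<alpha>, \<beta>) i * w i) = 0"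
      using orthogonal by blast
    then show ?thesis
      by (simp add: left_diff_distrib sum_subtractf)
  qed
  with nonzero show ?thesis by blast
qed

theorem theorem5p1:
  fixes d :: nat and G :: "((nat \<Rightarrow>\<^sub>0 nat) \<times> (nat \<Rightarrow>\<^sub>0 nat)) list"
  assumes "d \<ge> 1"
    and "length G \<le> d - 1"
    and "\<forall>(\<alpha>, \<beta>)\<in>set G. Poly_Mapping.keys \<alpha> \<subseteq> {..<d} \<and> Poly_Mapping.keys \<beta> \<subseteq> {..<d}"
  shows "\<exists>M s. M \<in> carrier_mat d d \<and> s \<in> carrier_vec d \<and> nontrivial_loop M s \<and>
           (\<forall>p\<in>generated_ideal d (map (\<lambda>(\<alpha>, \<beta>). pure_diff_binomial \<alpha> \<beta>) G).
              is_invariant M s p)"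
proof -
  have "length G < d"
    using assms(1,2) by simp
  then obtain w j where j: "j < d" "w j \<noteq> 0" and balanced: "\<forall>(\<alpha>, \<beta>)\<in>set G.
      (\<Sum>i<d. int (Poly_Mapping.lookup \<alpha> i) * w i) = (\<Sum>i<d. int (Poly_Mapping.lookup \<beta> i) * w i)"
    using exists_weight_balancing_exponents by blast
  define c :: "nat \<Rightarrow> rat" where "c = (\<lambda>i. 2 powi w i)"
  have binomial: "is_invariant (mat_diag d c) (vec d (\<lambda>_. 1)) (pure_diff_binomial \<alpha> \<beta>)"
    if "(\<alpha>, \<beta>) \<in> set G" for \<alpha> \<beta>
  proof (rule is_invariant_binomial_mat_diag)
    show keys: "Poly_Mapping.keys \<alpha> \<subseteq> {..<d}" "Poly_Mapping.keys \<beta> \<subseteq> {..<d}"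
      using assms(3) that by auto
    show "monomial_value c \<alpha> = monomial_value c \<beta>"
      using bspec[OF balanced that] by (simp add: c_def monomial_value_power_int[OF _ _ keys(1)]
          monomial_value_power_int[OF _ _ keys(2)])
  qed
  have "c j \<noteq> 1"
    using j(2) by (simp add: c_def power_int_eq_1_iff)
  then have nontrivial: "nontrivial_loop (mat_diag d c) (vec d (\<lambda>_. 1))"
    by (intro nontrivial_loop_mat_diag[OF j(1)]) (simp_all add: c_def j(1))
  have invariant: "is_invariant (mat_diag d c) (vec d (\<lambda>_. 1)) p"
    if "p \<in> generated_ideal d (map (\<lambda>(\<alpha>, \<beta>). pure_diff_binomial \<alpha> \<beta>) G)" for p
    using that binomial by (intro is_invariant_generated_ideal) auto
  show ?thesis
    using invariant nontrivial mat_diag_dim[of d c] vec_carrier[of d] by blast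
qed

end
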